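(* Let $K$ be a field, $0\le g\le[n/2]$ and $\lambda$ a partition of $n-2g$ with at most $m$ nonzero parts. Then $z_{g,\lambda}\mathbb B_n=z_{g,\lambda}K\mathfrak S_n$.
   Context: Setup: $m,n$ positive integers, $i'=2m+1-i$; $V$ a $K$-space with basis $v_1,\dots,v_{2m}$, skew form $\langle v_i,v_j\rangle=\langle v_{i'},v_{j'}\rangle=0$, $\langle v_i,v_{j'}\rangle=\delta_{ij}=-\langle v_{j'},v_i\rangle$ ($1\le i,j\le m$); $v_i^*=v_{i'}$ ($i\le m$), $v_i^*=-v_{i'}$ ($i>m$); $\alpha=\sum_{k=1}^{2m}v_k\otimes v_k^*$. $\mathbb B_n=\mathbb B_n(-2m)$ is the Brauer algebra with generators $s_i,e_i$; $K\mathfrak S_n$ is the subalgebra generated by the $s_i$; it acts on the right of $V^{\otimes n}$ by $(v_{i_1}\otimes\cdots\otimes v_{i_n})s_j=-(\cdots\otimes v_{i_{j+1}}\otimes v_{i_j}\otimes\cdots)$, $(v_{i_1}\otimes\cdots\otimes v_{i_n})e_j=-v_{i_1}\otimes\cdots\otimes v_{i_{j-1}}\otimes\alpha\otimes v_{i_{j+2}}\otimes\cdots$. Definition of $z_{g,\lambda}$ ($k=n-2g$): $v_\lambda=v_1^{\otimes\lambda_1}\otimes\cdots\otimes v_m^{\otimes\lambda_m}$; $\lambda'$ conjugate; $\mathfrak t^\lambda,\mathfrak t_\lambda$ the $\lambda$-tableaux filled with $1,\dots,k$ along rows, resp. down columns; $w_\lambda\in\mathfrak S_k$ with $\mathfrak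 t^\lambda w_\lambda=\mathfrak t_\lambda$ (right action on entries); $x_{\lambda'}=\sum_{w\in\mathfrak S_{\lambda'}}w$, $\mathfrak S_{\lambda'}$ the Young subgroup stabilizing $\{1,\dots,\lambda'_1\},\{\lambda'_1+1,\dots,\lambda'_1+\lambda'_2\},\dots$; $z_{g,\lambda}=\alpha^{\otimes g}\otimes(v_\lambda w_\lambda x_{\lambda'})$ with $\mathfrak S_k$ acting on $V^{\otimes k}$ via $\mathbb B_k$. *)

theory Defs
  imports "HOL-Combinatorics.Permutations"
begin

(* Tensors in V^{\<otimes>n}: coefficient functions on words (i_1,...,i_n), i_p \<in> {1..2m};
   the word u corresponds to the basis tensor v_{u!0} \<otimes> ... \<otimes> v_{u!(n-1)}. *)
type_synonym 'k tensor = "nat list \<Rightarrow> 'k"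

definition words :: "nat \<Rightarrow> nat \<Rightarrow> nat list set" where
  "words m n = {u. length u = n \<and> set u \<subseteq> {1..2*m}}"

(* eps m a b = <v_a, v_b>; it is also the coefficient of v_a \<otimes> v_b in alpha *)
definition eps :: "nat \<Rightarrow> nat \<Rightarrow> nat \<Rightarrow> 'k::field" where
  "eps m a b = (if 1 \<le> a \<and> a \<le> 2*m \<and> b = 2*m+1-a then (if a \<le> m then 1 else -1) else 0)"

definition basis_t :: "nat list \<Rightarrow> 'k::field tensor" where
  "basis_t x = (\<lambda>u. if u = x then 1 else 0)"

definition swap_at :: "nat \<Rightarrow> nat list \<Rightarrow> nat list" where
  "swap_at j u = u[j-1 := u!j, j := u!(j-1)]"

definition act_s :: "nat \<Rightarrow> nat \<Rightarrow> nat \<Rightarrow> 'k::field tensor \<Rightarrow> 'k tensor" where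
  "act_s m n j T = (\<lambda>u. if u \<in> words m n then - T (swap_at j u) else 0)"

(* right action of e_j (1 \<le> j < n):
   (v_w) e_j = - <v_{w_j},v_{w_{j+1}}> v_{w_1}..v_{w_{j-1}} \<otimes> alpha \<otimes> v_{w_{j+2}}.. *)
definition act_e :: "nat \<Rightarrow> nat \<Rightarrow> nat \<Rightarrow> 'k::field tensor \<Rightarrow> 'k tensor" where
  "act_e m n j T = (\<lambda>u. if u \<in> words m n then
      - eps m (u!(j-1)) (u!j) *
        (\<Sum>a\<in>{1..2*m}. \<Sum>b\<in>{1..2*m}. eps m a b * T (u[j-1 := a, j := b]))
    else 0)"

(* right action of a permutation p of {1..k} on V^{\<otimes>k} through the Brauer algebra:
   (v_x) p = sign(p) * (tensor in which the factor at position b is moved to position p b) *)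
definition tperm :: "(nat \<Rightarrow> nat) \<Rightarrow> 'k::field tensor \<Rightarrow> 'k tensor" where
  "tperm p T = (\<lambda>u. of_int (sign p) * T (map (\<lambda>b. u ! (p b - 1)) [1..<length u + 1]))"

(* z B_n : the K-span of { z b | b \<in> B_n }, i.e. the smallest subspace containing z stable
   under the actions of the generators s_j, e_j *)
inductive_set brauer_span :: "nat \<Rightarrow> nat \<Rightarrow> 'k::field tensor \<Rightarrow> 'k tensor set"
  for m n z where
  base: "z \<in> brauer_span m n z"
| add: "x \<in> brauer_span m n z \<Longrightarrow> y \<in> brauer_span m n z \<Longrightarrow> (\<lambda>u. x u + y u) \<in> brauer_span m n z"
| smult: "x \<in> brauer_span m n z \<Longrightarrow> (\<lambda>u. c * x u) \<in> brauer_span m n z"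
| gen_s: "x \<in> brauer_span m n z \<Longrightarrow> 1 \<le> j \<Longrightarrow> j < n \<Longrightarrow> act_s m n j x \<in> brauer_span m n z"
| gen_e: "x \<in> brauer_span m n z \<Longrightarrow> 1 \<le> j \<Longrightarrow> j < n \<Longrightarrow> act_e m n j x \<in> brauer_span m n z"

(* z K S_n : same, with generators s_j only *)
inductive_set sym_span :: "nat \<Rightarrow> nat \<Rightarrow> 'k::field tensor \<Rightarrow> 'k tensor set"
  for m n z where
  base: "z \<in> sym_span m n z"
| add: "x \<in> sym_span m n z \<Longrightarrow> y \<in> sym_span m n z \<Longrightarrow> (\<lambda>u. x u + y u) \<in> sym_span m n z"
| smult: "x \<in> sym_span m n z \<Longrightarrow> (\<lambda>u. c * x u) \<in> sym_span m n z"
| gen_s: "x \<in> sym_span m n z \<Longrightarrow> 1 \<le> j \<Longrightarrow> j < n \<Longrightarrow> act_s m n j x \<in> sym_span m n z"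

definition is_partition :: "nat list \<Rightarrow> nat \<Rightarrow> bool" where
  "is_partition lam k \<longleftrightarrow> sorted_wrt (\<ge>) lam \<and> 0 \<notin> set lam \<and> sum_list lam = k"

definition conj_part :: "nat list \<Rightarrow> nat list" where
  "conj_part lam = map (\<lambda>c. length (filter (\<lambda>x. c < x) lam)) [0..<(if lam = [] then 0 else hd lam)]"

(* boxes (r,c), 0-based row r and column c *)
definition boxes :: "nat list \<Rightarrow> (nat \<times> nat) set" where
  "boxes lam = {(r,c). r < length lam \<and> c < lam ! r}"

(* t^lambda: filled 1..k along rows;  t_lambda: filled 1..k down columns *)
definition t_row :: "nat list \<Rightarrow> nat \<times> nat \<Rightarrow> nat" where
  "t_row lam b = sum_list (take (fst b) lam) + snd b + 1"

definition t_col :: "nat list \<Rightarrow> nat \<times> nat \<Rightarrow> nat" where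
  "t_col lam b = sum_list (take (snd b) (conj_part lam)) + fst b + 1"

(* w_lambda with t^lambda w_lambda = t_lambda (right action on entries) *)
definition w_lam :: "nat list \<Rightarrow> nat \<Rightarrow> nat" where
  "w_lam lam a = (if \<exists>b\<in>boxes lam. t_row lam b = a
                  then t_col lam (THE b. b \<in> boxes lam \<and> t_row lam b = a) else a)"

definition young_block :: "nat list \<Rightarrow> nat \<Rightarrow> nat set" where
  "young_block mu i = {sum_list (take i mu) + 1 .. sum_list (take (Suc i) mu)}"

definition young_sub :: "nat list \<Rightarrow> (nat \<Rightarrow> nat) set" where
  "young_sub mu = {p. p permutes {1..sum_list mu} \<and> (\<forall>i<length mu. p ` young_block mu i = young_block mu i)}"

definition v_word :: "nat list \<Rightarrow> nat list" where
  "v_word lam = concat (map (\<lambda>i. replicate (lam ! i) (Suc i)) [0..<length lam])"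

(* v_lambda w_lambda x_{lambda'} *)
definition y_lam :: "nat list \<Rightarrow> 'k::field tensor" where
  "y_lam lam = (\<lambda>u. \<Sum>w\<in>young_sub (conj_part lam). tperm w (tperm (w_lam lam) (basis_t (v_word lam))) u)"

(* z_{g,lambda} = alpha^{\<otimes>g} \<otimes> (v_lambda w_lambda x_{lambda'}) in V^{\<otimes>n} *)
definition z_gl :: "nat \<Rightarrow> nat \<Rightarrow> nat \<Rightarrow> nat list \<Rightarrow> 'k::field tensor" where
  "z_gl m n g lam = (\<lambda>u. if u \<in> words m n then
      (\<Prod>t<g. eps m (u!(2*t)) (u!(2*t+1))) * y_lam lam (drop (2*g) u) else 0)"

end

theory Submission
  imports Defs
begin

(* B_n is generated by the s_j and the e_j, so it suffices that z K S_n is stable under every e_j.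
   We generalise e_j to the contraction C_{a,b} of two arbitrary positions a <> b
   (e_j = C_{j-1,j}).  Conjugation by s_j merely relabels the two positions, hence z K S_n is
   stable under all contractions as soon as each C_{a,b} z lies in z K S_n
   (brauer_span_eq_sym_span).  For z = alpha^{g} (x) Y the contractions are explicit:
   - a, a' the two legs of one factor alpha:  C_{a,a'} z = -2m z;
   - a a leg of alpha with partner a', b another position:  C_{a,b} z = T_{a',b} z, the
     transposition of the positions a' and b, which lies in z K S_n;
   - a, b both inside Y:  C_{a,b} z = 0 when Y lives in the tensor power of the isotropic
     subspace spanned by v_1..v_m.
   The last condition holds for y because v_lambda only uses letters <= m and the permutations
   w_lambda and those of the Young subgroup S_{lambda'} permute the positions {1..n-2g}; the latter
   is shown by counting the boxes of the Young diagram read along rows and down columns. *)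


section \<open>The symplectic form\<close>

lemma eps_antisym: "eps m a b = - (eps m b a :: 'k::field)"
  unfolding eps_def by (cases "a \<le> m"; cases "b \<le> m") auto

text \<open>The span of \<open>v\<^sub>1, \<dots>, v\<^sub>m\<close> is isotropic: a nonzero pairing needs a letter \<open>> m\<close>.\<close>
lemma eps_nonzero_high: "eps m c d \<noteq> (0::'k::field) \<Longrightarrow> m < c \<or> m < d"
  unfolding eps_def by (auto split: if_splits)

text \<open>The Gram matrix has exactly one nonzero entry \<open>\<plusminus>1\<close> in each column.\<close>
lemma eps_zero: "c \<noteq> 2*m+1-d \<Longrightarrow> eps m c d = (0::'k::field)"
  unfolding eps_def by auto

lemma eps_partner: "d \<in> {1..2*m} \<Longrightarrow> eps m (2*m+1-d) d = (if d \<le> m then -1 else (1::'k::field))"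
  unfolding eps_def by auto

text \<open>Hence its columns are orthonormal; this is what makes contracting a leg of \<open>\<alpha>\<close>
  with another position act as a transposition.\<close>
lemma eps_orth:
  assumes "d \<in> {1..2*m}" "x \<in> {1..2*m}"
  shows "(\<Sum>c\<in>{1..2*m}. eps m c d * eps m c x) = (if d = x then 1 else (0::'k::field))"
proof -
  let ?c = "2*m+1-d"
  have "(\<Sum>c\<in>{1..2*m}. eps m c d * (eps m c x::'k)) =
        (\<Sum>c\<in>{1..2*m}. if c = ?c then eps m c d * eps m c x else 0)"
    by (rule sum.cong) (simp_all add: eps_zero)
  also have "\<dots> = eps m ?c d * eps m ?c x"
    using assms by (subst sum.delta) auto
  also have "\<dots> = (if d = x then 1 else 0)"
  proof (cases "d = x")
    case True
    then show ?thesis using eps_partner[OF assms(1), where 'k='k] by simp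
  next
    case False
    then have "?c \<noteq> 2*m+1-x" using assms by auto
    then show ?thesis using False eps_zero[of ?c m x, where 'k='k] by simp
  qed
  finally show ?thesis .
qed

text \<open>The full contraction of \<open>\<alpha>\<close> with itself: \<open>\<langle>\<alpha>\<rangle> = 2m\<close>.\<close>
lemma eps_sq_sum:
  "(\<Sum>c\<in>{1..2*m}. \<Sum>d\<in>{1..2*m}. eps m c d * eps m c d) = (of_nat (2*m) :: 'k::field)"
proof -
  have "(\<Sum>c\<in>{1..2*m}. \<Sum>d\<in>{1..2*m}. eps m c d * (eps m c d::'k)) =
        (\<Sum>d\<in>{1..2*m}. \<Sum>c\<in>{1..2*m}. eps m c d * eps m c d)"
    by (rule sum.swap)
  also have "\<dots> = (\<Sum>d\<in>{1..2*m}. (1::'k))"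
  proof (intro sum.cong refl)
    fix d assume "d \<in> {1..2*m}"
    then show "(\<Sum>c\<in>{1..2*m}. eps m c d * eps m c d) = (1::'k)" using eps_orth[of d m d] by simp
  qed
  finally show ?thesis by simp
qed


lemma words_upd: "u \<in> words m n \<Longrightarrow> i < n \<Longrightarrow> c \<in> {1..2*m} \<Longrightarrow> u[i:=c] \<in> words m n"
  unfolding words_def using set_update_subset_insert[of u i c] by auto

lemma words_nth: "u \<in> words m n \<Longrightarrow> i < n \<Longrightarrow> u!i \<in> {1..2*m}"
  unfolding words_def by (auto dest!: nth_mem)

lemma words_len: "u \<in> words m n \<Longrightarrow> length u = n"
  unfolding words_def by auto


section \<open>Contractions and transpositions at arbitrary positions\<close>

text \<open>The contraction of the (0-based) positions \<open>a\<close> and \<open>b\<close>; \<open>e\<^sub>j\<close> is the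
  contraction of the adjacent positions \<open>j-1, j\<close>.\<close>
definition contr :: "nat \<Rightarrow> nat \<Rightarrow> nat \<Rightarrow> nat \<Rightarrow> 'k::field tensor \<Rightarrow> 'k tensor" where
  "contr m n a b T = (\<lambda>u. if u \<in> words m n then
      - eps m (u!a) (u!b) * (\<Sum>c\<in>{1..2*m}. \<Sum>d\<in>{1..2*m}. eps m c d * T (u[a := c, b := d]))
    else 0)"

text \<open>The (signed) transposition of the positions \<open>p\<close> and \<open>q\<close>; \<open>s\<^sub>j\<close> is the adjacent case.\<close>
definition transpos :: "nat \<Rightarrow> nat \<Rightarrow> nat \<Rightarrow> nat \<Rightarrow> 'k::field tensor \<Rightarrow> 'k tensor" where
  "transpos m n p q T = (\<lambda>u. if u \<in> words m n then - T (u[p := u!q, q := u!p]) else 0)"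

lemma act_e_contr: "act_e m n j T = contr m n (j-1) j T"
  unfolding act_e_def contr_def by simp

lemma act_s_transpos: "act_s m n j T = transpos m n (j-1) j T"
  unfolding act_s_def transpos_def swap_at_def by simp

lemma transpos_sym: "p \<noteq> q \<Longrightarrow> transpos m n p q T = transpos m n q p T"
  unfolding transpos_def by (intro ext) (simp add: list_update_swap[of p q])

lemma contr_sym:
  assumes ab: "a \<noteq> b"
  shows "contr m n a b T = contr m n b a (T::'k::field tensor)"
proof -
  have swap_sum: "(\<Sum>c\<in>{1..2*m}. \<Sum>d\<in>{1..2*m}. eps m c d * T (u[a := c, b := d])) =
        - (\<Sum>c\<in>{1..2*m}. \<Sum>d\<in>{1..2*m}. eps m c d * T (u[b := c, a := d]))" for u
  proof -
    have "(\<Sum>c\<in>{1..2*m}. \<Sum>d\<in>{1..2*m}. eps m c d * T (u[b := c, a := d])) =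
          (\<Sum>d\<in>{1..2*m}. \<Sum>c\<in>{1..2*m}. eps m c d * T (u[b := c, a := d]))"
      by (rule sum.swap)
    also have "\<dots> = (\<Sum>d\<in>{1..2*m}. \<Sum>c\<in>{1..2*m}. - (eps m d c * T (u[a := d, b := c])))"
    proof (intro sum.cong refl)
      fix d c
      show "eps m c d * T (u[b := c, a := d]) = - (eps m d c * T (u[a := d, b := c]))"
        using ab eps_antisym[of m c d, where 'k='k] list_update_swap[of b a u c d] by simp
    qed
    finally show ?thesis by (simp add: sum_negf)
  qed
  show ?thesis
  proof
    fix u
    show "contr m n a b T u = contr m n b a T u"
      unfolding contr_def using swap_sum[of u] eps_antisym[of m "u!a" "u!b", where 'k='k] by simp
  qed
qed

lemma contr_add: "contr m n a b (\<lambda>u. x u + y u) = (\<lambda>u. contr m n a b x u + contr m n a b y u)"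
  unfolding contr_def by (intro ext) (simp add: sum.distrib algebra_simps)

lemma contr_smult: "contr m n a b (\<lambda>u. c * x u) = (\<lambda>u. c * contr m n a b x u)"
  unfolding contr_def by (intro ext) (simp add: sum_distrib_left algebra_simps)

lemma transpos_conj_step:
  assumes "p < q" "Suc q < n"
  shows "transpos m n p (Suc q) T = act_s m n (Suc q) (transpos m n p q (act_s m n (Suc q) T))"
proof
  fix u
  show "transpos m n p (Suc q) T u = act_s m n (Suc q) (transpos m n p q (act_s m n (Suc q) T)) u"
  proof (cases "u \<in> words m n")
    case True
    have l: "length u = n" using True words_len by auto
    let ?s = "swap_at (Suc q) u"
    have sw: "?s \<in> words m n" unfolding swap_at_def
      using True assms l by (auto intro!: words_upd words_nth)
    let ?t = "?s[p := ?s!q, q := ?s!p]"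
    have tw: "?t \<in> words m n"
      using sw assms l by (auto intro!: words_upd words_nth)
    have "swap_at (Suc q) ?t = u[p := u!Suc q, Suc q := u!p]"
      using assms l unfolding swap_at_def
      by (intro nth_equalityI) (auto simp: nth_list_update)
    then show ?thesis using True sw tw unfolding transpos_def act_s_def by simp
  qed (simp add: transpos_def act_s_def)
qed

lemma transpos_in_sym_span:
  assumes "x \<in> sym_span m n z" "p \<noteq> q" "p < n" "q < n"
  shows "transpos m n p q x \<in> sym_span m n z"
proof -
  have adj: "transpos m n p (Suc (p + d)) x \<in> sym_span m n z"
    if "x \<in> sym_span m n z" "Suc (p + d) < n" for p d x
    using that
  proof (induction d arbitrary: x)
    case 0
    then show ?case using sym_span.gen_s[OF 0(1), of "Suc p"] by (simp add: act_s_transpos)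
  next
    case (Suc d)
    let ?j = "Suc (Suc (p + d))"
    have "act_s m n ?j x \<in> sym_span m n z"
      using sym_span.gen_s[OF Suc.prems(1)] Suc.prems by simp
    then have "transpos m n p (Suc (p + d)) (act_s m n ?j x) \<in> sym_span m n z"
      using Suc.IH Suc.prems by simp
    then show ?case
      using transpos_conj_step[of p "Suc (p + d)" n m x] Suc.prems sym_span.gen_s[of _ m n z ?j]
      by simp
  qed
  show ?thesis
  proof (cases "p < q")
    case True
    then obtain d where "q = Suc (p + d)" using less_imp_Suc_add by blast
    then show ?thesis using adj assms by simp
  next
    case False
    then obtain d where "p = Suc (q + d)" using assms(2) less_imp_Suc_add by (metis linorder_neqE)
    then show ?thesis using adj[where p = q and d = d] assms transpos_sym by metis
  qed
qed


subsection \<open>Contractions commute with \<open>s\<^sub>j\<close> up to relabelling positions\<close>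

definition pos_swap :: "nat \<Rightarrow> nat \<Rightarrow> nat" where
  "pos_swap j i = (if i = j-1 then j else if i = j then j-1 else i)"

lemma pos_swap_lt: "1 \<le> j \<Longrightarrow> j < n \<Longrightarrow> a < n \<Longrightarrow> pos_swap j a < n"
  unfolding pos_swap_def by auto

lemma pos_swap_inj: "1 \<le> j \<Longrightarrow> a \<noteq> b \<Longrightarrow> pos_swap j a \<noteq> pos_swap j b"
  unfolding pos_swap_def by auto

lemma length_swap_at [simp]: "length (swap_at j u) = length u"
  unfolding swap_at_def by simp

lemma swap_at_nth_pos_swap:
  "1 \<le> j \<Longrightarrow> j < length u \<Longrightarrow> a < length u \<Longrightarrow> swap_at j u ! pos_swap j a = u ! a"
  unfolding swap_at_def pos_swap_def by (auto simp: nth_list_update)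

lemma swap_at_upd:
  assumes "1 \<le> j" "j < length u" "a < length u" "b < length u" "a \<noteq> b"
  shows "swap_at j (u[a := c, b := d]) = (swap_at j u)[pos_swap j a := c, pos_swap j b := d]"
proof (rule nth_equalityI)
  show "length (swap_at j (u[a := c, b := d])) =
        length ((swap_at j u)[pos_swap j a := c, pos_swap j b := d])"
    by simp
  fix i assume "i < length (swap_at j (u[a := c, b := d]))"
  then have i: "i < length u" by simp
  have nth_swap: "swap_at j v ! i = v ! (pos_swap j i)" if "length v = length u" for v
    using that i assms(1,2) unfolding swap_at_def pos_swap_def by (simp add: nth_list_update)
  have inv: "x = pos_swap j i \<longleftrightarrow> pos_swap j x = i" "pos_swap j (pos_swap j x) = x" for x
    using assms(1) unfolding pos_swap_def by auto
  have lt: "pos_swap j x < length u" if "x < length u" for x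
    using that assms(1,2) unfolding pos_swap_def by auto
  show "swap_at j (u[a := c, b := d]) ! i = (swap_at j u)[pos_swap j a := c, pos_swap j b := d] ! i"
    using nth_swap[of "u[a := c, b := d]"] nth_swap[of u] i assms lt[of a] lt[of b] inv(2)[of a] inv(2)[of b]
    by (auto simp: nth_list_update inv(1))
qed

lemma contr_act_s:
  assumes "1 \<le> j" "j < n" "a < n" "b < n" "a \<noteq> b"
  shows "contr m n a b (act_s m n j x) =
         act_s m n j (contr m n (pos_swap j a) (pos_swap j b) (x::'k::field tensor))"
proof
  fix u
  show "contr m n a b (act_s m n j x) u = act_s m n j (contr m n (pos_swap j a) (pos_swap j b) x) u"
  proof (cases "u \<in> words m n")
    case True
    have l: "length u = n" using True words_len by auto
    have sw: "swap_at j u \<in> words m n" unfolding swap_at_def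
      using True assms l by (auto intro!: words_upd words_nth)
    have "(\<Sum>c\<in>{1..2*m}. \<Sum>d\<in>{1..2*m}. eps m c d * act_s m n j x (u[a := c, b := d])) =
          (\<Sum>c\<in>{1..2*m}. \<Sum>d\<in>{1..2*m}.
             - (eps m c d * x ((swap_at j u)[pos_swap j a := c, pos_swap j b := d])))"
      using True assms l by (intro sum.cong refl) (simp add: act_s_def swap_at_upd words_upd)
    moreover have "contr m n (pos_swap j a) (pos_swap j b) x (swap_at j u) = - eps m (u!a) (u!b) *
       (\<Sum>c\<in>{1..2*m}. \<Sum>d\<in>{1..2*m}. eps m c d * x ((swap_at j u)[pos_swap j a := c, pos_swap j b := d]))"
      using sw assms l by (simp add: contr_def swap_at_nth_pos_swap)
    ultimately show ?thesis using True
      unfolding contr_def[of m n a b] by (simp add: act_s_def sum_negf)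
  qed (simp add: contr_def act_s_def)
qed


lemma sym_span_contr_closed:
  assumes base: "\<And>a b. a < n \<Longrightarrow> b < n \<Longrightarrow> a \<noteq> b \<Longrightarrow> contr m n a b z \<in> sym_span m n z"
  shows "x \<in> sym_span m n z \<Longrightarrow>
    \<forall>a b. a < n \<longrightarrow> b < n \<longrightarrow> a \<noteq> b \<longrightarrow> contr m n a b x \<in> sym_span m n (z::'k::field tensor)"
proof (induction rule: sym_span.induct)
  case base
  then show ?case using assms by blast
next
  case (add x y)
  then show ?case by (auto simp: contr_add intro: sym_span.add)
next
  case (smult x c)
  then show ?case by (auto simp: contr_smult intro: sym_span.smult)
next
  case (gen_s x j)
  show ?case
  proof (intro allI impI)
    fix a b assume ab: "a < n" "b < n" "a \<noteq> b"
    have "contr m n (pos_swap j a) (pos_swap j b) x \<in> sym_span m n z"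
      using gen_s ab by (simp add: pos_swap_lt pos_swap_inj)
    then show "contr m n a b (act_s m n j x) \<in> sym_span m n z"
      using contr_act_s[of j n a b m x] ab gen_s.hyps sym_span.gen_s[of _ m n z j] by simp
  qed
qed

lemma sym_span_subset_brauer_span: "x \<in> sym_span m n z \<Longrightarrow> x \<in> brauer_span m n z"
  by (induction rule: sym_span.induct) (auto intro: brauer_span.intros)

theorem brauer_span_eq_sym_span:
  assumes "\<And>a b. a < n \<Longrightarrow> b < n \<Longrightarrow> a \<noteq> b \<Longrightarrow> contr m n a b z \<in> sym_span m n z"
  shows "brauer_span m n z = sym_span m n (z::'k::field tensor)"
proof
  show "brauer_span m n z \<subseteq> sym_span m n z"
  proof
    fix x assume "x \<in> brauer_span m n z"
    then show "x \<in> sym_span m n z"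
    proof (induction rule: brauer_span.induct)
      case (gen_e x j)
      then show ?case using sym_span_contr_closed[OF assms gen_e.IH] by (simp add: act_e_contr)
    qed (auto intro: sym_span.intros)
  qed
qed (auto intro: sym_span_subset_brauer_span)


section \<open>Young diagrams\<close>

definition diagram :: "nat list \<Rightarrow> (nat \<times> nat) set" where
  "diagram ns = {(r,c). r < length ns \<and> c < ns!r}"

definition row_reading :: "nat list \<Rightarrow> nat \<times> nat \<Rightarrow> nat" where
  "row_reading ns b = sum_list (take (fst b) ns) + snd b + 1"

lemma sum_take_mono: "i \<le> j \<Longrightarrow> sum_list (take i (xs::nat list)) \<le> sum_list (take j xs)"
  by (metis le_add1 le_Suc_ex sum_list_append take_add)

lemma sum_take_Suc:
  "r < length xs \<Longrightarrow> sum_list (take (Suc r) (xs::nat list)) = sum_list (take r xs) + xs!r"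
  by (simp add: take_Suc_conv_app_nth)

lemma diagram_Sigma: "diagram ns = (SIGMA r:{..<length ns}. {..<ns!r})"
  unfolding diagram_def by auto

lemma card_diagram: "card (diagram ns) = sum_list ns"
  by (simp add: diagram_Sigma sum_list_sum_nth atLeast0LessThan)

lemma row_reading_bij: "bij_betw (row_reading ns) (diagram ns) {1..sum_list ns}"
proof -
  have inj: "inj_on (row_reading ns) (diagram ns)"
  proof (rule inj_onI)
    fix x y assume x: "x \<in> diagram ns" and y: "y \<in> diagram ns"
      and e: "row_reading ns x = row_reading ns y"
    obtain r c r' c' where xy: "x = (r,c)" "y = (r',c')" by (cases x, cases y)
    have a: "r < length ns" "c < ns!r" "r' < length ns" "c' < ns!r'"
      using x y xy unfolding diagram_def by auto
    have e': "sum_list (take r ns) + c = sum_list (take r' ns) + c'"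
      using e xy unfolding row_reading_def by simp
    have "r = r'"
    proof (rule ccontr)
      assume "r \<noteq> r'"
      then consider "r < r'" | "r' < r" by linarith
      then show False
      proof cases
        case 1
        then have "sum_list (take (Suc r) ns) \<le> sum_list (take r' ns)" by (intro sum_take_mono) auto
        then show False using sum_take_Suc[of r ns] a e' by linarith
      next
        case 2
        then have "sum_list (take (Suc r') ns) \<le> sum_list (take r ns)" by (intro sum_take_mono) auto
        then show False using sum_take_Suc[of r' ns] a e' by linarith
      qed
    qed
    then show "x = y" using xy e' by simp
  qed
  have "row_reading ns ` diagram ns \<subseteq> {1..sum_list ns}"
  proof
    fix v assume "v \<in> row_reading ns ` diagram ns"
    then obtain r c where "r < length ns" "c < ns!r" "v = sum_list (take r ns) + c + 1"
      unfolding diagram_def row_reading_def by auto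
    moreover have "sum_list (take (Suc r) ns) \<le> sum_list ns"
      using sum_take_mono[of "Suc r" "length ns" ns] \<open>r < length ns\<close> by simp
    ultimately show "v \<in> {1..sum_list ns}" using sum_take_Suc[of r ns] by auto
  qed
  moreover have "card (row_reading ns ` diagram ns) = card {1..sum_list ns}"
    using card_image[OF inj] card_diagram by simp
  ultimately have "row_reading ns ` diagram ns = {1..sum_list ns}"
    using card_subset_eq[of "{1..sum_list ns}"] by simp
  then show ?thesis using inj unfolding bij_betw_def by simp
qed

text \<open>For a partition, the number of parts exceeding \<open>c\<close> counts the rows of column \<open>c\<close>.\<close>
lemma length_filter_sorted:
  "sorted_wrt (\<ge>) (xs::nat list) \<Longrightarrow>
   r < length (filter (\<lambda>x. c < x) xs) \<longleftrightarrow> r < length xs \<and> c < xs!r"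
proof (induction xs arbitrary: r)
  case (Cons x xs)
  show ?case
  proof (cases "c < x")
    case True
    then show ?thesis using Cons by (cases r) auto
  next
    case False
    then have "filter (\<lambda>x. c < x) xs = []" using Cons.prems by (auto simp: filter_empty_conv)
    moreover have "\<not> (r < length (x#xs) \<and> c < (x#xs)!r)"
      using False Cons.prems by (cases r) (auto, metis nth_mem order.strict_trans2)
    ultimately show ?thesis using False by simp
  qed
qed simp

text \<open>The diagram of \<open>\<lambda>'\<close> is the transpose of that of \<open>\<lambda>\<close>, and \<open>t\<^sub>\<lambda>\<close> is the row reading of
  the transposed diagram.\<close>
lemma boxes_conj_part:
  assumes "sorted_wrt (\<ge>) lam"
  shows "boxes lam = prod.swap ` diagram (conj_part lam)"
proof -
  have "(r,c) \<in> boxes lam \<longleftrightarrow> (c,r) \<in> diagram (conj_part lam)" for r c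
  proof
    assume "(r,c) \<in> boxes lam"
    then have a: "r < length lam" "c < lam!r" unfolding boxes_def by auto
    have "lam!r \<le> lam!0"
      using assms a sorted_wrt_nth_less[of "(\<ge>)" lam 0 r] by (cases r) auto
    then have "c < hd lam" "lam \<noteq> []" using a by (cases lam; auto)+
    then show "(c,r) \<in> diagram (conj_part lam)"
      using a length_filter_sorted[OF assms, of r c] unfolding diagram_def conj_part_def by auto
  next
    assume "(c,r) \<in> diagram (conj_part lam)"
    then show "(r,c) \<in> boxes lam"
      using length_filter_sorted[OF assms, of r c] unfolding diagram_def conj_part_def boxes_def
      by (auto split: if_splits)
  qed
  then show ?thesis by force
qed

lemma t_col_bij:
  assumes "sorted_wrt (\<ge>) lam"
  shows "bij_betw (t_col lam) (boxes lam) {1..sum_list (conj_part lam)}"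
proof -
  have "bij_betw prod.swap (boxes lam) (diagram (conj_part lam))"
    unfolding boxes_conj_part[OF assms] by (rule bij_betw_imageI) (auto simp: image_image)
  moreover have "t_col lam = row_reading (conj_part lam) \<circ> prod.swap"
    unfolding t_col_def row_reading_def by auto
  ultimately show ?thesis using bij_betw_trans row_reading_bij by metis
qed

text \<open>\<open>|\<lambda>'| = |\<lambda>|\<close>, so the Young subgroup \<open>\<SS>\<^sub>\<lambda>\<^sub>'\<close> acts on the same positions as \<open>w\<^sub>\<lambda>\<close>.\<close>
lemma sum_conj_part:
  assumes "sorted_wrt (\<ge>) lam"
  shows "sum_list (conj_part lam) = sum_list lam"
  using bij_betw_same_card[OF t_col_bij[OF assms]] card_diagram[of lam]
  unfolding boxes_def diagram_def by simp

lemma w_lam_permutes: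
  assumes "sorted_wrt (\<ge>) lam"
  shows "w_lam lam permutes {1..sum_list lam}"
proof -
  have "boxes lam = diagram lam" "t_row lam = row_reading lam"
    unfolding boxes_def diagram_def t_row_def row_reading_def by auto
  then have tr: "bij_betw (t_row lam) (boxes lam) {1..sum_list lam}"
    using row_reading_bij by simp
  have tc: "bij_betw (t_col lam) (boxes lam) {1..sum_list lam}"
    using t_col_bij[OF assms] sum_conj_part[OF assms] by simp
  have img: "t_row lam ` boxes lam = {1..sum_list lam}" using tr unfolding bij_betw_def by simp
  have eq: "w_lam lam a = (t_col lam \<circ> the_inv_into (boxes lam) (t_row lam)) a"
    if "a \<in> {1..sum_list lam}" for a
  proof -
    have "\<exists>b\<in>boxes lam. t_row lam b = a" using that img by (metis imageE)
    then show ?thesis unfolding w_lam_def the_inv_into_def by simp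
  qed
  have "bij_betw (w_lam lam) {1..sum_list lam} {1..sum_list lam}"
    using bij_betw_cong[of "{1..sum_list lam}" "w_lam lam"] eq
      bij_betw_trans[OF bij_betw_the_inv_into[OF tr] tc] by blast
  moreover have "w_lam lam a = a" if "a \<notin> {1..sum_list lam}" for a
  proof -
    have "\<not> (\<exists>b\<in>boxes lam. t_row lam b = a)" using that img by blast
    then show ?thesis unfolding w_lam_def by simp
  qed
  ultimately show ?thesis by (rule bij_imp_permutes)
qed


section \<open>The tensor \<open>y = v\<^sub>\<lambda> w\<^sub>\<lambda> x\<^sub>\<lambda>\<^sub>'\<close> lies in the isotropic part\<close>

text \<open>Words of length \<open>k\<close> in the letters \<open>1, \<dots>, m\<close>, i.e. basis tensors of the
  \<open>k\<close>-th tensor power of the isotropic subspace spanned by \<open>v\<^sub>1, \<dots>, v\<^sub>m\<close>.\<close>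
definition low_word :: "nat \<Rightarrow> nat \<Rightarrow> nat list \<Rightarrow> bool" where
  "low_word m k v \<longleftrightarrow> length v = k \<and> (\<forall>x\<in>set v. x \<le> m)"

lemma tperm_low_support:
  assumes p: "p permutes {1..k}" and T: "\<And>v. T v \<noteq> 0 \<Longrightarrow> low_word m k v"
    and nz: "tperm p T u \<noteq> (0::'k::field)"
  shows "low_word m k u"
proof -
  let ?v = "map (\<lambda>b. u ! (p b - 1)) [1..<length u + 1]"
  have "T ?v \<noteq> 0" using nz unfolding tperm_def by auto
  then have v: "low_word m k ?v" by (rule T)
  then have l: "length u = k" unfolding low_word_def by (simp del: upt_Suc)
  have "x \<le> m" if "x \<in> set u" for x
  proof -
    obtain i where i: "i < length u" "u!i = x" using \<open>x \<in> set u\<close> by (metis in_set_conv_nth)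
    obtain b where b: "p b = Suc i" using p unfolding permutes_def by metis
    have "b \<in> {1..k}"
    proof (rule ccontr)
      assume "b \<notin> {1..k}"
      then have "p b = b" using p unfolding permutes_def by blast
      then show False using b i l \<open>b \<notin> {1..k}\<close> by auto
    qed
    then have "?v ! (b - 1) = x" "?v ! (b - 1) \<in> set ?v"
      using b i l by (auto simp del: upt_Suc intro!: nth_mem)
    then show ?thesis using v unfolding low_word_def by auto
  qed
  then show ?thesis using l unfolding low_word_def by auto
qed

lemma v_word_low: "length lam \<le> m \<Longrightarrow> low_word m (sum_list lam) (v_word lam)"
  unfolding low_word_def v_word_def by (simp add: length_concat comp_def map_nth)

lemma y_lam_low_support:
  assumes "sorted_wrt (\<ge>) lam" "length lam \<le> m" "y_lam lam v \<noteq> (0::'k::field)"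
  shows "\<forall>x\<in>set v. x \<le> m"
proof -
  let ?k = "sum_list lam"
  let ?t = "tperm (w_lam lam) (basis_t (v_word lam) :: 'k tensor)"
  have b: "low_word m ?k w" if "(basis_t (v_word lam) :: 'k tensor) w \<noteq> 0" for w
    using that v_word_low[OF assms(2)] unfolding basis_t_def by (auto split: if_splits)
  have t: "low_word m ?k w" if "?t w \<noteq> 0" for w
    using tperm_low_support[OF w_lam_permutes[OF assms(1)] b that] .
  obtain w where w: "w \<in> young_sub (conj_part lam)" "tperm w ?t v \<noteq> 0"
    using assms(3) unfolding y_lam_def by (meson sum.neutral)
  have "w permutes {1..?k}"
    using w(1) sum_conj_part[OF assms(1)] unfolding young_sub_def by simp
  from tperm_low_support[OF this t w(2)] show ?thesis unfolding low_word_def by simp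
qed


section \<open>Contractions of \<open>\<alpha>\<^sup>\<otimes>\<^sup>g \<otimes> Y\<close>\<close>

definition alpha_tensor :: "nat \<Rightarrow> nat \<Rightarrow> nat \<Rightarrow> 'k::field tensor \<Rightarrow> 'k tensor" where
  "alpha_tensor m n g Y = (\<lambda>u. if u \<in> words m n then
      (\<Prod>t<g. eps m (u!(2*t)) (u!(2*t+1))) * Y (drop (2*g) u) else 0)"

lemma z_gl_alpha_tensor: "z_gl m n g lam = alpha_tensor m n g (y_lam lam)"
  unfolding z_gl_def alpha_tensor_def by simp

lemma contr_alpha_tensor_isotropic:
  assumes supp: "\<And>v. Y v \<noteq> 0 \<Longrightarrow> \<forall>x\<in>set v. x \<le> m"
    and ab: "2*g \<le> a" "2*g \<le> b" "a \<noteq> b" "a < n" "b < n"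
  shows "contr m n a b (alpha_tensor m n g Y) = (\<lambda>u. (0::'k::field))"
proof
  fix u
  show "contr m n a b (alpha_tensor m n g Y) u = 0"
  proof (cases "u \<in> words m n")
    case True
    have l: "length u = n" using True words_len by auto
    have term_zero: "eps m c d * alpha_tensor m n g Y (u[a := c, b := d]) = 0" for c d
    proof (cases "eps m c d = (0::'k)")
      case False
      let ?v = "drop (2*g) (u[a := c, b := d])"
      have "?v ! (a - 2*g) = c" "?v ! (b - 2*g) = d"
        "a - 2*g < length ?v" "b - 2*g < length ?v"
        using ab l by auto
      then have "c \<in> set ?v" "d \<in> set ?v" by (metis nth_mem)+
      then have "Y ?v = 0" using supp eps_nonzero_high[OF False] by force
      then show ?thesis unfolding alpha_tensor_def by simp
    qed simp
    show ?thesis using True unfolding contr_def term_zero by simp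
  qed (simp add: contr_def)
qed

text \<open>Fix a position \<open>a\<close> among the first \<open>2g\<close>; it is a leg of the factor \<open>\<alpha>\<close> number
  \<open>a div 2\<close>, whose other leg is the partner \<open>a'\<close>.  Up to the sign \<open>sg\<close>, the tensor is the
  pairing of the letters at \<open>a, a'\<close> times a tensor \<open>rest\<close> not depending on them.\<close>
locale alpha_leg =
  fixes m n g a :: nat and Y :: "'k::field tensor"
  assumes a_lt: "a < 2*g" and gn: "2*g \<le> n"
begin

definition a' where "a' = (if even a then a+1 else a-1)"
definition sg :: 'k where "sg = (if even a then 1 else -1)"
definition rest :: "'k tensor" where
  "rest v = (\<Prod>t\<in>{..<g}-{a div 2}. eps m (v!(2*t)) (v!(2*t+1))) * Y (drop (2*g) v)"

lemma a'_lt: "a' < 2*g" using a_lt unfolding a'_def by auto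

lemma a'_ne: "a' \<noteq> a" unfolding a'_def by (cases a) auto

lemma a'_div: "a' div 2 = a div 2" unfolding a'_def by auto presburger

lemma alpha_tensor_split:
  "alpha_tensor m n g Y v = (if v \<in> words m n then sg * eps m (v!a) (v!a') * rest v else 0)"
proof -
  let ?t = "a div 2"
  have "(\<Prod>t<g. eps m (v!(2*t)) (v!(2*t+1))) =
        eps m (v!(2*?t)) (v!(2*?t+1)) * (\<Prod>t\<in>{..<g}-{?t}. eps m (v!(2*t)) (v!(2*t+1)) :: 'k)"
    using a_lt by (subst prod.remove[of _ ?t]) auto
  moreover have "eps m (v!(2*?t)) (v!(2*?t+1)) = sg * (eps m (v!a) (v!a') :: 'k)"
    unfolding sg_def a'_def
    by (cases "even a") (auto elim!: oddE intro: eps_antisym)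
  ultimately show ?thesis unfolding alpha_tensor_def rest_def by (simp add: ac_simps)
qed

lemma rest_upd:
  assumes "i \<in> {a, a'}"
  shows "rest (v[i := c]) = rest v"
proof -
  have i: "i div 2 = a div 2" "i < 2*g" using assms a'_div a_lt a'_lt by auto
  have "(\<Prod>t\<in>{..<g}-{a div 2}. eps m (v[i:=c]!(2*t)) (v[i:=c]!(2*t+1))) =
        (\<Prod>t\<in>{..<g}-{a div 2}. eps m (v!(2*t)) (v!(2*t+1)) :: 'k)"
  proof (rule prod.cong)
    fix t assume "t \<in> {..<g}-{a div 2}"
    then have "2*t \<noteq> i" "2*t+1 \<noteq> i" using i by auto
    then show "eps m (v[i:=c]!(2*t)) (v[i:=c]!(2*t+1)) = eps m (v!(2*t)) (v!(2*t+1))" by simp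
  qed simp
  then show ?thesis unfolding rest_def using i by simp
qed

lemma contr_pair:
  "contr m n a a' (alpha_tensor m n g Y) = (\<lambda>u. - of_nat (2*m) * alpha_tensor m n g Y u)"
proof
  fix u
  show "contr m n a a' (alpha_tensor m n g Y) u = - of_nat (2*m) * alpha_tensor m n g Y u"
  proof (cases "u \<in> words m n")
    case True
    have l: "length u = n" using True words_len by auto
    have an: "a < n" "a' < n" using a_lt a'_lt gn by auto
    have "eps m c d * alpha_tensor m n g Y (u[a := c, a' := d]) = sg * rest u * (eps m c d * eps m c d)"
      if "c \<in> {1..2*m}" "d \<in> {1..2*m}" for c d
    proof -
      have "u[a := c, a' := d] \<in> words m n" using that True an by (auto intro!: words_upd)
      moreover have "rest (u[a := c, a' := d]) = rest u" by (simp add: rest_upd)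
      ultimately show ?thesis using l an a'_ne unfolding alpha_tensor_split by (simp add: nth_list_update)
    qed
    then have "(\<Sum>c\<in>{1..2*m}. \<Sum>d\<in>{1..2*m}. eps m c d * alpha_tensor m n g Y (u[a := c, a' := d])) =
               (\<Sum>c\<in>{1..2*m}. \<Sum>d\<in>{1..2*m}. sg * rest u * (eps m c d * eps m c d))"
      by (intro sum.cong refl) auto
    also have "\<dots> = sg * rest u * of_nat (2*m)"
      using eps_sq_sum[of m, where 'k='k] by (simp add: sum_distrib_left[symmetric])
    finally show ?thesis
      using True unfolding contr_def alpha_tensor_split[of u] by (simp add: algebra_simps)
  qed (simp add: contr_def alpha_tensor_def)
qed

lemma contr_leg:
  assumes b: "b < n" "b \<noteq> a" "b \<noteq> a'"
  shows "contr m n a b (alpha_tensor m n g Y) = transpos m n a' b (alpha_tensor m n g Y)"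
proof
  fix u
  show "contr m n a b (alpha_tensor m n g Y) u = transpos m n a' b (alpha_tensor m n g Y) u"
  proof (cases "u \<in> words m n")
    case True
    have l: "length u = n" using True words_len by auto
    have an: "a < n" "a' < n" using a_lt a'_lt gn by auto
    let ?x = "u!a'"
    have x: "?x \<in> {1..2*m}" using True an words_nth by auto
    have "eps m c d * alpha_tensor m n g Y (u[a := c, b := d]) =
          sg * (eps m c d * eps m c ?x) * rest (u[b := d])"
      if "c \<in> {1..2*m}" "d \<in> {1..2*m}" for c d
      using that True l an b a'_ne rest_upd[of a "u[b := d]" c] list_update_swap[of a b u c d]
      by (simp add: alpha_tensor_split words_upd nth_list_update)
    then have "(\<Sum>c\<in>{1..2*m}. \<Sum>d\<in>{1..2*m}. eps m c d * alpha_tensor m n g Y (u[a := c, b := d])) =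
               (\<Sum>c\<in>{1..2*m}. \<Sum>d\<in>{1..2*m}. sg * (eps m c d * eps m c ?x) * rest (u[b := d]))"
      by (intro sum.cong refl) auto
    also have "\<dots> = (\<Sum>d\<in>{1..2*m}. \<Sum>c\<in>{1..2*m}. sg * (eps m c d * eps m c ?x) * rest (u[b := d]))"
      by (rule sum.swap)
    also have "\<dots> = (\<Sum>d\<in>{1..2*m}. sg * (\<Sum>c\<in>{1..2*m}. eps m c d * eps m c ?x) * rest (u[b := d]))"
      by (simp add: sum_distrib_left sum_distrib_right)
    also have "\<dots> = (\<Sum>d\<in>{1..2*m}. if d = ?x then sg * rest (u[b := d]) else 0)"
    proof (intro sum.cong refl)
      fix d assume d: "d \<in> {1..2*m}"
      show "sg * (\<Sum>c\<in>{1..2*m}. eps m c d * eps m c ?x) * rest (u[b := d]) =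
            (if d = ?x then sg * rest (u[b := d]) else 0)"
        using eps_orth[OF d x, where 'k='k] by simp
    qed
    also have "\<dots> = sg * rest (u[b := ?x])" using x by simp
    finally have s: "(\<Sum>c\<in>{1..2*m}. \<Sum>d\<in>{1..2*m}. eps m c d * alpha_tensor m n g Y (u[a := c, b := d])) =
        sg * rest (u[b := ?x])" .
    have "u[a' := u!b, b := ?x] \<in> words m n" using True an b by (auto intro!: words_upd words_nth)
    moreover have "rest (u[a' := u!b, b := ?x]) = rest (u[b := ?x])"
      using rest_upd[of a' "u[b := ?x]" "u!b"] b list_update_swap[of a' b u "u!b" ?x] by simp
    ultimately have "transpos m n a' b (alpha_tensor m n g Y) u = - (sg * eps m (u!a) (u!b) * rest (u[b := ?x]))"
      using True l an b a'_ne by (simp add: transpos_def alpha_tensor_split nth_list_update)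
    then show ?thesis using True s unfolding contr_def by (simp add: algebra_simps)
  qed (simp add: contr_def transpos_def)
qed

end

lemma contr_alpha_tensor_in_sym_span:
  assumes gn: "2*g \<le> n" and supp: "\<And>v. Y v \<noteq> 0 \<Longrightarrow> \<forall>x\<in>set v. x \<le> m"
    and ab: "a < n" "b < n" "a \<noteq> b"
  shows "contr m n a b (alpha_tensor m n g Y) \<in> sym_span m n (alpha_tensor m n g (Y::'k::field tensor))"
proof -
  let ?z = "alpha_tensor m n g Y"
  have leg: "contr m n a b ?z \<in> sym_span m n ?z" if "a < 2*g" "b < n" "a \<noteq> b" for a b
  proof -
    interpret alpha_leg m n g a Y using that gn by unfold_locales auto
    show ?thesis
    proof (cases "b = a'")
      case True
      then show ?thesis using contr_pair by (metis sym_span.base sym_span.smult)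
    next
      case False
      moreover have "a' < n" using a'_lt gn by simp
      ultimately show ?thesis
        using contr_leg transpos_in_sym_span[OF sym_span.base, of a' b n m ?z] that by simp
    qed
  qed
  consider "a < 2*g" | "b < 2*g" | "2*g \<le> a" "2*g \<le> b" by linarith
  then show ?thesis
  proof cases
    case 1
    then show ?thesis using leg ab by simp
  next
    case 2
    then show ?thesis using leg[of b a] ab contr_sym[of a b m n ?z] by simp
  next
    case 3
    then have "contr m n a b ?z = (\<lambda>u. 0 * ?z u)"
      using contr_alpha_tensor_isotropic[OF supp] ab by simp
    then show ?thesis using sym_span.smult[OF sym_span.base, of 0] by simp
  qed
qed


theorem lemma4p7:
  fixes m n g :: nat and lam :: "nat list"
  assumes "0 < m" and "0 < n"
    and "g \<le> n div 2"
    and "is_partition lam (n - 2*g)"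
    and "length lam \<le> m"
  shows "brauer_span m n (z_gl m n g lam :: 'k::field tensor) = sym_span m n (z_gl m n g lam)"
proof -
  have gn: "2*g \<le> n" using assms(3) by linarith
  have "sorted_wrt (\<ge>) lam" using assms(4) unfolding is_partition_def by simp
  then have "\<And>v. y_lam lam v \<noteq> (0::'k) \<Longrightarrow> \<forall>x\<in>set v. x \<le> m"
    using y_lam_low_support assms(5) by blast
  then show ?thesis
    unfolding z_gl_alpha_tensor
    by (intro brauer_span_eq_sym_span contr_alpha_tensor_in_sym_span[OF gn])
qed

end
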